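(* Fix real numbers $w>0$ and $c>0$. For each integer $n\ge 3$, let $T_n$ be a binary phylogenetic tree with leaf set $X_n$, $|X_n|=n$, with positive edge lengths and minimum interior edge length $w$, and let $d_n$ be its tree metric. Let $\delta_n(x,y)=d_n(x,y)+\epsilon_{xy}$ for unordered pairs $\{x,y\}\subseteq X_n$, $x\ne y$, where the $\epsilon_{xy}$ are independent normal random variables with mean $0$ and variance $\sigma_n^2=c^2/\log(n)$. Let $P_n$ be the probability that $|\delta_n(x,y)-d_n(x,y)|<\frac{1}{2}w$ holds simultaneously for all pairs of distinct $x,y\in X_n$. Then $P_n\to 0$ as $n\to\infty$ if $c>\frac{1}{4}w$, and $P_n\to 1$ as $n\to\infty$ if $c<\frac14 w$.
   Context: A phylogenetic $X$-tree is a tree whose leaves are bijectively labelled by $X$ and whose interior vertices have degree at least 3; it is binary if all interior vertices have degree 3. Given positive edge lengths, the tree metric $d$ assigns to each pair of leaves the total length of the path between them. An interior edge is an edge not incident to a leaf. $\log$ denotes the natural logarithm. *)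

theory Defs
  imports "HOL-Probability.Probability"
begin

definition simple_graph :: "'v set \<Rightarrow> 'v set set \<Rightarrow> bool" where
  "simple_graph V E \<longleftrightarrow> finite V \<and> (\<forall>e\<in>E. \<exists>u v. e = {u, v} \<and> u \<noteq> v \<and> u \<in> V \<and> v \<in> V)"

definition is_path :: "'v set \<Rightarrow> 'v set set \<Rightarrow> 'v \<Rightarrow> 'v \<Rightarrow> 'v list \<Rightarrow> bool" where
  "is_path V E u v ps \<longleftrightarrow> ps \<noteq> [] \<and> hd ps = u \<and> last ps = v \<and> distinct ps \<and> set ps \<subseteq> V
     \<and> (\<forall>i. Suc i < length ps \<longrightarrow> {ps ! i, ps ! Suc i} \<in> E)"

definition path_edges :: "'v list \<Rightarrow> 'v set set" where
  "path_edges ps = {{ps ! i, ps ! Suc i} | i. Suc i < length ps}"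

definition is_tree :: "'v set \<Rightarrow> 'v set set \<Rightarrow> bool" where
  "is_tree V E \<longleftrightarrow> simple_graph V E \<and> V \<noteq> {} \<and>
     (\<forall>u\<in>V. \<forall>v\<in>V. \<exists>!ps. is_path V E u v ps)"

definition degree :: "'v set set \<Rightarrow> 'v \<Rightarrow> nat" where
  "degree E v = card {e\<in>E. v \<in> e}"

definition leaves :: "'v set \<Rightarrow> 'v set set \<Rightarrow> 'v set" where
  "leaves V E = {v\<in>V. degree E v = 1}"

definition interior_edges :: "'v set \<Rightarrow> 'v set set \<Rightarrow> 'v set set" where
  "interior_edges V E = {e\<in>E. e \<inter> leaves V E = {}}"

definition binary_phylo_tree :: "'l set \<Rightarrow> 'v set \<Rightarrow> 'v set set \<Rightarrow> ('l \<Rightarrow> 'v) \<Rightarrow> bool" where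
  "binary_phylo_tree X V E phi \<longleftrightarrow> is_tree V E \<and> bij_betw phi X (leaves V E)
     \<and> (\<forall>v\<in>V - leaves V E. degree E v = 3)"

definition tree_metric :: "'v set \<Rightarrow> 'v set set \<Rightarrow> ('v set \<Rightarrow> real) \<Rightarrow> ('l \<Rightarrow> 'v) \<Rightarrow> 'l \<Rightarrow> 'l \<Rightarrow> real" where
  "tree_metric V E len phi x y =
     (\<Sum>e\<in>path_edges (THE ps. is_path V E (phi x) (phi y) ps). len e)"

definition upairs :: "'l set \<Rightarrow> 'l set set" where
  "upairs X = {{x, y} | x y. x \<in> X \<and> y \<in> X \<and> x \<noteq> y}"

end

theory Submission
  imports Defs
begin

text \<open>The perturbed distances only matter through the noise, so \<open>P\<^sub>n = (1 - q\<^sub>n)^N\<close> with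
  \<open>N = n choose 2\<close> and \<open>q\<^sub>n = Pr(|N(0,\<sigma>\<^sub>n\<^sup>2)| \<ge> w/2)\<close>. Since
  \<open>(w/2)\<^sup>2/(2\<sigma>\<^sub>n\<^sup>2) = a ln n\<close> with \<open>a = w\<^sup>2/(8c\<^sup>2)\<close>, Gaussian tail estimates give
  \<open>n\<^sup>-\<^sup>b \<lesssim> q\<^sub>n \<lesssim> n\<^sup>-\<^sup>b\<^sup>'\<close> for every \<open>b' < a < b\<close>. If \<open>a < 2\<close> then \<open>N q\<^sub>n \<rightarrow> \<infinity>\<close> and
  \<open>(1 - q\<^sub>n)^N \<le> exp (-N q\<^sub>n) \<rightarrow> 0\<close>; if \<open>a > 2\<close> then \<open>N q\<^sub>n \<rightarrow> 0\<close> and Bernoulli's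
  inequality gives \<open>(1 - q\<^sub>n)^N \<ge> 1 - N q\<^sub>n \<rightarrow> 1\<close>. The threshold \<open>a = 2\<close> is \<open>c = w/4\<close>.\<close>

definition normal_tail :: "real \<Rightarrow> real \<Rightarrow> real" where
  "normal_tail s t = measure (density lborel (normal_density 0 s)) {x. t \<le> \<bar>x\<bar>}"

lemma abs_ge_set_borel [measurable]: "{x::real. t \<le> \<bar>x\<bar>} \<in> sets borel"
  by measurable

lemma normal_tail_nonneg: "0 \<le> normal_tail s t"
  by (simp add: normal_tail_def)

lemma normal_tail_le_one:
  assumes "s > 0"
  shows "normal_tail s t \<le> 1"
proof -
  interpret prob_space "density lborel (normal_density 0 s)"
    using prob_space_normal_density[OF assms] by simp
  show ?thesis by (simp add: normal_tail_def)
qed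

lemma normal_tail_eq_integral:
  assumes "s > 0"
  shows "normal_tail s t = (\<integral>x. normal_density 0 s x * indicator {x. t \<le> \<bar>x\<bar>} x \<partial>lborel)"
proof -
  let ?A = "{x::real. t \<le> \<bar>x\<bar>}"
  have int: "integrable lborel (\<lambda>x. normal_density 0 s x * indicator ?A x)"
    by (rule integrable_real_mult_indicator) (simp_all add: integrable_normal_density assms)
  have "emeasure (density lborel (normal_density 0 s)) ?A
      = (\<integral>\<^sup>+x. ennreal (normal_density 0 s x * indicator ?A x) \<partial>lborel)"
    by (subst emeasure_density) (auto intro!: nn_integral_cong simp: indicator_def)
  also have "\<dots> = ennreal (\<integral>x. normal_density 0 s x * indicator ?A x \<partial>lborel)"
    using int by (intro nn_integral_eq_integral) auto
  finally show ?thesis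
    unfolding normal_tail_def measure_def by (simp add: integral_nonneg_AE)
qed

text \<open>Split \<open>x\<^sup>2 = (1 - u) x\<^sup>2 + u x\<^sup>2\<close> in the exponent and bound the first part on the tail.\<close>
lemma normal_density_le_on_tail:
  fixes s t u x :: real
  assumes s: "s > 0" and u: "0 < u" "u < 1" and t: "0 \<le> t" "t \<le> \<bar>x\<bar>"
  shows "normal_density 0 s x
           \<le> exp (-(1 - u) * t\<^sup>2 / (2 * s\<^sup>2)) / sqrt u * normal_density 0 (s / sqrt u) x"
proof -
  define A where "A = -(1 - u) * t\<^sup>2 / (2 * s\<^sup>2)"
  define B where "B = -(x\<^sup>2) / (2 * (s\<^sup>2 / u))"
  have sq: "(s / sqrt u)\<^sup>2 = s\<^sup>2 / u" using u by (simp add: power_divide)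
  have sqrt_eq: "sqrt (2 * pi * (s\<^sup>2 / u)) = sqrt (2 * pi * s\<^sup>2) / sqrt u"
    using u by (simp add: real_sqrt_divide)
  have rhs: "exp A / sqrt u * normal_density 0 (s / sqrt u) x
      = 1 / sqrt (2 * pi * s\<^sup>2) * (exp A * exp B)"
    unfolding normal_density_def sq sqrt_eq B_def using u s by (simp add: field_simps)
  have "t\<^sup>2 \<le> x\<^sup>2" using t by (metis abs_le_square_iff abs_of_nonneg)
  hence "(1 - u) * t\<^sup>2 \<le> (1 - u) * x\<^sup>2" using u by (intro mult_left_mono) auto
  hence "-(x\<^sup>2) / (2 * s\<^sup>2) \<le> (-(1 - u) * t\<^sup>2 - u * x\<^sup>2) / (2 * s\<^sup>2)"
    using s by (intro divide_right_mono) (auto simp: algebra_simps)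
  also have "\<dots> = A + B" unfolding A_def B_def using u s by (simp add: field_simps)
  finally have "exp (-(x\<^sup>2) / (2 * s\<^sup>2)) \<le> exp A * exp B" by (simp add: exp_add[symmetric])
  then show ?thesis
    unfolding A_def[symmetric] rhs unfolding normal_density_def using s
    by (intro mult_left_mono) auto
qed

lemma normal_tail_upper:
  fixes s t u :: real
  assumes s: "s > 0" and u: "0 < u" "u < 1" and t: "0 \<le> t"
  shows "normal_tail s t \<le> exp (-(1 - u) * t\<^sup>2 / (2 * s\<^sup>2)) / sqrt u"
proof -
  let ?K = "exp (-(1 - u) * t\<^sup>2 / (2 * s\<^sup>2)) / sqrt u"
  have s': "s / sqrt u > 0" using s u by simp
  have "normal_tail s t \<le> (\<integral>x. ?K * normal_density 0 (s / sqrt u) x \<partial>lborel)"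
    unfolding normal_tail_eq_integral[OF s]
  proof (rule integral_mono)
    show "integrable lborel (\<lambda>x. normal_density 0 s x * indicator {x. t \<le> \<bar>x\<bar>} x)"
      by (rule integrable_real_mult_indicator) (simp_all add: integrable_normal_density s)
    show "integrable lborel (\<lambda>x. ?K * normal_density 0 (s / sqrt u) x)"
      using integrable_normal_density[OF s'] by simp
  qed (use normal_density_le_on_tail[OF s u t] u in \<open>auto simp: indicator_def\<close>)
  also have "\<dots> = ?K" using integral_normal_density[OF s'] by simp
  finally show ?thesis .
qed

lemma normal_tail_lower:
  fixes s t r :: real
  assumes s: "s > 0" and t: "0 \<le> t" "t \<le> r"
  shows "(r - t) * normal_density 0 s r \<le> normal_tail s t"
proof -
  have "(r - t) * normal_density 0 s r
      = (\<integral>x. normal_density 0 s r * indicator {t..r} x \<partial>lborel)"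
    using t by simp
  also have "\<dots> \<le> (\<integral>x. normal_density 0 s x * indicator {x. t \<le> \<bar>x\<bar>} x \<partial>lborel)"
  proof (rule integral_mono)
    show "integrable lborel (\<lambda>x. normal_density 0 s x * indicator {x. t \<le> \<bar>x\<bar>} x)"
      by (rule integrable_real_mult_indicator) (simp_all add: integrable_normal_density s)
    show "integrable lborel (\<lambda>x. normal_density 0 s r * indicator {t..r} x)"
      using t by (simp add: integrable_indicator_iff emeasure_lborel_Icc)
    fix x :: real
    show "normal_density 0 s r * indicator {t..r} x
          \<le> normal_density 0 s x * indicator {x. t \<le> \<bar>x\<bar>} x"
    proof (cases "x \<in> {t..r}")
      case True
      hence "x\<^sup>2 \<le> r\<^sup>2" using t by (intro power_mono) auto
      hence "exp (-(r\<^sup>2) / (2 * s\<^sup>2)) \<le> exp (-(x\<^sup>2) / (2 * s\<^sup>2))"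
        using s by (simp add: divide_right_mono)
      then show ?thesis using True t unfolding normal_density_def
        by (auto simp: indicator_def intro!: divide_right_mono)
    qed (auto simp: indicator_def)
  qed
  finally show ?thesis by (simp add: normal_tail_eq_integral[OF s])
qed

lemma normal_tail_log_variance_upper:
  fixes c t b :: real
  assumes c: "c > 0" and t: "0 \<le> t" and b: "0 < b" "b < t\<^sup>2 / (2 * c\<^sup>2)"
  obtains K where "\<And>x. x > 1 \<Longrightarrow> normal_tail (sqrt (c\<^sup>2 / ln x)) t \<le> K * x powr (-b)"
proof -
  define a where "a = t\<^sup>2 / (2 * c\<^sup>2)"
  have "0 < a" using b by (simp add: a_def)
  define u where "u = (a - b) / a"
  have u: "0 < u" "u < 1" using b \<open>0 < a\<close> by (auto simp: u_def field_simps simp flip: a_def)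
  have "normal_tail (sqrt (c\<^sup>2 / ln x)) t \<le> 1 / sqrt u * x powr (-b)" if x: "x > 1" for x
  proof -
    have "normal_tail (sqrt (c\<^sup>2 / ln x)) t
        \<le> exp (-(1 - u) * t\<^sup>2 / (2 * (sqrt (c\<^sup>2 / ln x))\<^sup>2)) / sqrt u"
      using c x t by (intro normal_tail_upper u) auto
    also have "-(1 - u) * t\<^sup>2 / (2 * (sqrt (c\<^sup>2 / ln x))\<^sup>2) = -b * ln x"
      using x c \<open>0 < a\<close> by (simp add: u_def a_def field_simps)
    finally show ?thesis using x by (simp add: powr_def)
  qed
  then show thesis by (rule that)
qed

lemma normal_tail_log_variance_lower:
  fixes c t b :: real
  assumes c: "c > 0" and t: "0 \<le> t" and b: "t\<^sup>2 / (2 * c\<^sup>2) < b"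
  obtains C where "C > 0" and "\<And>x. x \<ge> 3 \<Longrightarrow> C * x powr (-b) \<le> normal_tail (sqrt (c\<^sup>2 / ln x)) t"
proof -
  \<comment> \<open>\<open>r\<close> is chosen so that the density of variance \<open>c\<^sup>2 / ln x\<close> at \<open>r\<close> is
    \<open>x\<^sup>-\<^sup>b sqrt (ln x) / (c sqrt (2\<pi>))\<close>.\<close>
  define r where "r = sqrt (2 * c\<^sup>2 * b)"
  have "0 \<le> b" using b by (smt (verit) zero_le_divide_iff zero_le_power2)
  have "t\<^sup>2 < 2 * c\<^sup>2 * b" using b c by (simp add: field_simps)
  hence "t < r" unfolding r_def using t by (simp add: real_less_rsqrt)
  define C where "C = (r - t) * sqrt (ln 3) / (c * sqrt (2 * pi))"
  have "C > 0" using \<open>t < r\<close> c by (simp add: C_def)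
  moreover have "C * x powr (-b) \<le> normal_tail (sqrt (c\<^sup>2 / ln x)) t" if x: "x \<ge> 3" for x
  proof -
    define s where "s = sqrt (c\<^sup>2 / ln x)"
    have ln: "ln x > 0" "sqrt (ln 3) \<le> sqrt (ln x)" using x by auto
    have "s > 0" using ln c by (simp add: s_def)
    have "r\<^sup>2 = 2 * c\<^sup>2 * b" using \<open>0 \<le> b\<close> by (simp add: r_def)
    hence "exp (-(r\<^sup>2) / (2 * s\<^sup>2)) = x powr (-b)"
      using ln x c by (simp add: s_def powr_def)
    moreover have "sqrt (2 * pi * s\<^sup>2) = c * sqrt (2 * pi) / sqrt (ln x)"
      using c ln by (simp add: s_def real_sqrt_mult real_sqrt_divide)
    ultimately have nd: "normal_density 0 s r = sqrt (ln x) / (c * sqrt (2 * pi)) * x powr (-b)"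
      unfolding normal_density_def using c by (simp add: field_simps)
    have "C * x powr (-b) \<le> (r - t) * normal_density 0 s r"
      unfolding nd C_def using ln \<open>t < r\<close> c
      by (simp add: divide_right_mono mult_right_mono mult_left_mono)
    also have "\<dots> \<le> normal_tail s t"
      using \<open>s > 0\<close> t \<open>t < r\<close> by (intro normal_tail_lower) auto
    finally show ?thesis by (simp add: s_def)
  qed
  ultimately show thesis by (rule that)
qed

lemma (in prob_space) prob_all_abs_less_indep:
  fixes e :: "'i \<Rightarrow> 'a \<Rightarrow> real" and g :: "real \<Rightarrow> real"
  assumes U: "finite U"
    and ind: "indep_vars (\<lambda>_. borel) e U"
    and dist: "\<And>p. p \<in> U \<Longrightarrow> distributed M lborel (e p) g"
    and D: "prob_space (density lborel g)"
  shows "prob {\<omega> \<in> space M. \<forall>p\<in>U. \<bar>e p \<omega>\<bar> < t}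
       = (1 - measure (density lborel g) {x. t \<le> \<bar>x\<bar>}) ^ card U"
proof (cases "U = {}")
  case True
  then show ?thesis by (simp add: prob_space)
next
  case False
  interpret D: prob_space "density lborel g" by (rule D)
  define A where "A p = e p -` {x. \<bar>x\<bar> < t} \<inter> space M" for p
  have ind_sets: "indep_sets (\<lambda>i. {e i -` B \<inter> space M | B. B \<in> sets borel}) U"
    using ind unfolding indep_vars_def2 by auto
  have "prob (\<Inter>p\<in>U. A p) = (\<Prod>p\<in>U. prob (A p))"
    by (rule indep_setsD[OF ind_sets subset_refl False U])
       (auto simp: A_def intro!: exI[of _ "{x. \<bar>x\<bar> < t}"])
  moreover have "(\<Inter>p\<in>U. A p) = {\<omega> \<in> space M. \<forall>p\<in>U. \<bar>e p \<omega>\<bar> < t}"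
    using False by (auto simp: A_def)
  moreover have "prob (A p) = 1 - D.prob {x. t \<le> \<bar>x\<bar>}" if p: "p \<in> U" for p
  proof -
    have "prob (A p) = measure (distr M lborel (e p)) {x. \<bar>x\<bar> < t}"
      unfolding A_def using distributed_measurable[OF dist[OF p]]
      by (subst measure_distr) auto
    also have "\<dots> = D.prob (space (density lborel g) - {x. t \<le> \<bar>x\<bar>})"
      using distributed_distr_eq_density[OF dist[OF p]] by (simp add: set_diff_eq not_le)
    also have "\<dots> = 1 - D.prob {x. t \<le> \<bar>x\<bar>}"
      by (rule D.prob_compl) simp
    finally show ?thesis .
  qed
  ultimately show ?thesis by simp
qed

lemma finite_upairs: "finite X \<Longrightarrow> finite (upairs X)"
  by (rule finite_subset[of _ "Pow X"]) (auto simp: upairs_def)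

lemma card_upairs:
  assumes "finite X"
  shows "card (upairs X) = card X choose 2"
proof -
  have "upairs X = {B. B \<subseteq> X \<and> card B = 2}"
    unfolding upairs_def by (auto simp: card_2_iff)
  then show ?thesis using n_subsets[OF assms, of 2] by simp
qed

lemma choose_two_le_square: "real (n choose 2) \<le> real n ^ 2"
proof -
  have "n choose 2 \<le> n ^ 2"
    by (cases "2 \<le> n") (auto intro: binomial_le_pow simp: binomial_eq_0)
  then show ?thesis by (metis of_nat_le_iff of_nat_power)
qed

lemma square_le_four_choose_two:
  assumes "n \<ge> 2"
  shows "real n ^ 2 / 4 \<le> real (n choose 2)"
proof -
  have "even (n * (n - 1))" by (cases "even n") auto
  hence "2 * (n choose 2) = n * (n - 1)" by (simp add: choose_two)
  hence "2 * real (n choose 2) = real n * (real n - 1)"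
    using assms by (metis of_nat_1 of_nat_diff of_nat_mult of_nat_numeral le_trans one_le_numeral)
  hence "2 * real (n choose 2) = real n * real n - real n" by (simp add: algebra_simps)
  moreover have "2 * real n \<le> real n * real n" using assms by (intro mult_right_mono) auto
  ultimately show ?thesis unfolding power2_eq_square by linarith
qed

lemma powr_two_minus:
  fixes x :: real
  assumes "x > 0"
  shows "x powr (2 - b) = x\<^sup>2 * x powr (-b)"
proof -
  have "x powr (2 - b) = x powr 2 * x powr (-b)" by (simp add: powr_add[symmetric])
  then show ?thesis using assms by (simp add: powr_numeral)
qed

lemma power_choose_two_tendsto_one:
  fixes q :: "nat \<Rightarrow> real"
  assumes q: "\<forall>\<^sub>F n in sequentially. 0 \<le> q n \<and> q n \<le> 1"
    and bound: "\<forall>\<^sub>F n in sequentially. q n \<le> K * real n powr (-b)" and b: "b > 2"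
  shows "(\<lambda>n. (1 - q n) ^ (n choose 2)) \<longlonglongrightarrow> 1"
proof (rule tendsto_sandwich)
  show "\<forall>\<^sub>F n in sequentially. (1 - q n) ^ (n choose 2) \<le> 1"
    using q by eventually_elim (auto intro: power_le_one)
  show "\<forall>\<^sub>F n in sequentially. 1 - K * real n powr (2 - b) \<le> (1 - q n) ^ (n choose 2)"
    using q bound eventually_gt_at_top[of 0]
  proof eventually_elim
    case (elim n)
    have "real (n choose 2) * q n \<le> (real n)\<^sup>2 * (K * real n powr (-b))"
      using elim choose_two_le_square[of n] by (intro mult_mono) auto
    hence "1 - K * real n powr (2 - b) \<le> 1 - real (n choose 2) * q n"
      using elim by (simp add: powr_two_minus mult.left_commute)
    also have "\<dots> \<le> (1 - q n) ^ (n choose 2)"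
      using Bernoulli_inequality[of "- q n" "n choose 2"] elim by simp
    finally show ?case .
  qed
  show "(\<lambda>n. 1 - K * real n powr (2 - b)) \<longlonglongrightarrow> 1"
    using tendsto_diff[OF tendsto_const tendsto_mult_right_zero[OF
          tendsto_neg_powr[OF _ filterlim_real_sequentially]], of "2 - b" 1 K] b
    by simp
qed (rule tendsto_const)

lemma power_choose_two_tendsto_zero:
  fixes q :: "nat \<Rightarrow> real"
  assumes q: "\<forall>\<^sub>F n in sequentially. 0 \<le> q n \<and> q n \<le> 1"
    and bound: "\<forall>\<^sub>F n in sequentially. C * real n powr (-b) \<le> q n"
    and b: "b < 2" and C: "C > 0"
  shows "(\<lambda>n. (1 - q n) ^ (n choose 2)) \<longlonglongrightarrow> 0"
proof (rule tendsto_sandwich)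
  show "\<forall>\<^sub>F n in sequentially. 0 \<le> (1 - q n) ^ (n choose 2)"
    using q by eventually_elim simp
  show "\<forall>\<^sub>F n in sequentially. (1 - q n) ^ (n choose 2) \<le> 4 / C * real n powr (b - 2)"
    using q bound eventually_ge_at_top[of 2]
  proof eventually_elim
    case (elim n)
    define Y where "Y = real (n choose 2) * q n"
    have "(real n)\<^sup>2 / 4 * (C * real n powr (-b)) \<le> Y"
      using elim square_le_four_choose_two[of n] C unfolding Y_def by (intro mult_mono) auto
    hence lower: "C / 4 * real n powr (2 - b) \<le> Y"
      using elim by (simp add: powr_two_minus mult_ac)
    have pos: "0 < C / 4 * real n powr (2 - b)" using C elim by simp
    have "(1 - q n) ^ (n choose 2) \<le> exp (- q n) ^ (n choose 2)"
      using elim exp_ge_add_one_self[of "- q n"] by (intro power_mono) auto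
    also have "\<dots> = exp (- Y)" by (simp add: Y_def exp_of_nat_mult[symmetric])
    also have "\<dots> \<le> 1 / Y"
    proof -
      have "Y \<le> exp Y" using exp_ge_add_one_self[of Y] by linarith
      then show ?thesis using lower pos by (simp add: exp_minus field_simps)
    qed
    also have "\<dots> \<le> 1 / (C / 4 * real n powr (2 - b))"
      using lower pos by (intro divide_left_mono) auto
    also have "\<dots> = 4 / C * real n powr (b - 2)"
      using elim by (simp add: powr_minus_divide[symmetric] powr_diff)
    finally show ?case .
  qed
  show "(\<lambda>n. 4 / C * real n powr (b - 2)) \<longlonglongrightarrow> 0"
    using tendsto_mult_right_zero[OF tendsto_neg_powr[OF _ filterlim_real_sequentially],
          of "b - 2" "4 / C"] b
    by simp
qed (rule tendsto_const)

lemma normal_tail_log_variance_bounded: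
  assumes "c > 0"
  shows "\<forall>\<^sub>F n in sequentially.
           0 \<le> normal_tail (sqrt (c\<^sup>2 / ln (real n))) t
           \<and> normal_tail (sqrt (c\<^sup>2 / ln (real n))) t \<le> 1"
  using eventually_ge_at_top[of 2]
  by eventually_elim (use assms in \<open>auto simp: normal_tail_nonneg intro!: normal_tail_le_one\<close>)

lemma normal_tail_log_variance_power_choose_two_tendsto_zero:
  assumes c: "c > 0" and t: "0 \<le> t" "t < 2 * c"
  shows "(\<lambda>n. (1 - normal_tail (sqrt (c\<^sup>2 / ln (real n))) t) ^ (n choose 2)) \<longlonglongrightarrow> 0"
proof -
  have "t\<^sup>2 < (2 * c)\<^sup>2" using t by (intro power_strict_mono) auto
  then have small: "t\<^sup>2 / (2 * c\<^sup>2) < 2" using c by (simp add: field_simps power_mult_distrib)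
  define b where "b = (t\<^sup>2 / (2 * c\<^sup>2) + 2) / 2"
  have b: "t\<^sup>2 / (2 * c\<^sup>2) < b" "b < 2" using small by (simp_all add: b_def)
  obtain C where "C > 0"
    and lower: "\<And>x. x \<ge> 3 \<Longrightarrow> C * x powr (-b) \<le> normal_tail (sqrt (c\<^sup>2 / ln x)) t"
    using normal_tail_log_variance_lower[OF c t(1) b(1)] by blast
  have "\<forall>\<^sub>F n in sequentially. C * real n powr (-b) \<le> normal_tail (sqrt (c\<^sup>2 / ln (real n))) t"
    using eventually_ge_at_top[of 3] by eventually_elim (simp add: lower)
  then show ?thesis
    by (rule power_choose_two_tendsto_zero[OF normal_tail_log_variance_bounded[OF c] _ b(2) \<open>C > 0\<close>])
qed

lemma normal_tail_log_variance_power_choose_two_tendsto_one: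
  assumes c: "c > 0" and t: "2 * c < t"
  shows "(\<lambda>n. (1 - normal_tail (sqrt (c\<^sup>2 / ln (real n))) t) ^ (n choose 2)) \<longlonglongrightarrow> 1"
proof -
  have "(2 * c)\<^sup>2 < t\<^sup>2" using c t by (intro power_strict_mono) auto
  then have large: "t\<^sup>2 / (2 * c\<^sup>2) > 2" using c by (simp add: field_simps power_mult_distrib)
  define b where "b = (t\<^sup>2 / (2 * c\<^sup>2) + 2) / 2"
  have b: "0 < b" "b < t\<^sup>2 / (2 * c\<^sup>2)" "2 < b" using large by (simp_all add: b_def)
  obtain K
    where upper: "\<And>x. x > 1 \<Longrightarrow> normal_tail (sqrt (c\<^sup>2 / ln x)) t \<le> K * x powr (-b)"
    using normal_tail_log_variance_upper[OF c _ b(1,2)] c t by auto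
  have "\<forall>\<^sub>F n in sequentially. normal_tail (sqrt (c\<^sup>2 / ln (real n))) t \<le> K * real n powr (-b)"
    using eventually_ge_at_top[of 2] by eventually_elim (simp add: upper)
  then show ?thesis
    by (rule power_choose_two_tendsto_one[OF normal_tail_log_variance_bounded[OF c] _ b(3)])
qed

theorem proposition1:
  fixes w c :: real
    and X :: "nat \<Rightarrow> 'l set"
    and V :: "nat \<Rightarrow> 'v set" and E :: "nat \<Rightarrow> 'v set set"
    and phi :: "nat \<Rightarrow> 'l \<Rightarrow> 'v" and len :: "nat \<Rightarrow> 'v set \<Rightarrow> real"
    and M :: "nat \<Rightarrow> 'w measure"
    and eps :: "nat \<Rightarrow> 'l set \<Rightarrow> 'w \<Rightarrow> real"
    and P :: "nat \<Rightarrow> real"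
  assumes w_pos: "w > 0" and c_pos: "c > 0"
    and card_X: "\<And>n. n \<ge> 3 \<Longrightarrow> finite (X n) \<and> card (X n) = n"
    and tree: "\<And>n. n \<ge> 3 \<Longrightarrow> binary_phylo_tree (X n) (V n) (E n) (phi n)"
    and len_pos: "\<And>n e. n \<ge> 3 \<Longrightarrow> e \<in> E n \<Longrightarrow> len n e > 0"
    and min_int: "\<And>n. n \<ge> 3 \<Longrightarrow> interior_edges (V n) (E n) \<noteq> {} \<Longrightarrow>
                    Min (len n ` interior_edges (V n) (E n)) = w"
    and prob: "\<And>n. n \<ge> 3 \<Longrightarrow> prob_space (M n)"
    and indep: "\<And>n. n \<ge> 3 \<Longrightarrow>
                  prob_space.indep_vars (M n) (\<lambda>_. borel) (eps n) (upairs (X n))"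
    and normal: "\<And>n p. n \<ge> 3 \<Longrightarrow> p \<in> upairs (X n) \<Longrightarrow>
                  distributed (M n) lborel (eps n p) (normal_density 0 (sqrt (c\<^sup>2 / ln (real n))))"
    and P_def: "\<And>n. P n = measure (M n)
                  {\<omega> \<in> space (M n). \<forall>x\<in>X n. \<forall>y\<in>X n. x \<noteq> y \<longrightarrow>
                     \<bar>(tree_metric (V n) (E n) (len n) (phi n) x y + eps n {x, y} \<omega>)
                       - tree_metric (V n) (E n) (len n) (phi n) x y\<bar> < w / 2}"
  shows "(c > w / 4 \<longrightarrow> P \<longlonglongrightarrow> 0) \<and> (c < w / 4 \<longrightarrow> P \<longlonglongrightarrow> 1)"
proof -
  define q where "q n = normal_tail (sqrt (c\<^sup>2 / ln (real n))) (w / 2)" for n :: nat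
  have "\<forall>\<^sub>F n in sequentially. (1 - q n) ^ (n choose 2) = P n"
    using eventually_ge_at_top[of 3]
  proof eventually_elim
    case (elim n)
    interpret prob_space "M n" using prob[OF elim] .
    \<comment> \<open>The tree metric cancels.\<close>
    have "P n = prob {\<omega> \<in> space (M n). \<forall>p\<in>upairs (X n). \<bar>eps n p \<omega>\<bar> < w / 2}"
      unfolding P_def upairs_def by (intro arg_cong[where f = prob]) auto
    also have "\<dots> = (1 - q n) ^ card (upairs (X n))"
      unfolding q_def normal_tail_def using card_X[OF elim] elim c_pos
      by (intro prob_all_abs_less_indep finite_upairs indep normal prob_space_normal_density) auto
    finally show ?case using card_X[OF elim] by (simp add: card_upairs)
  qed
  moreover have "(\<lambda>n. (1 - q n) ^ (n choose 2)) \<longlonglongrightarrow> 0" if "c > w / 4"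
    unfolding q_def using that w_pos
    by (intro normal_tail_log_variance_power_choose_two_tendsto_zero c_pos) auto
  moreover have "(\<lambda>n. (1 - q n) ^ (n choose 2)) \<longlonglongrightarrow> 1" if "c < w / 4"
    unfolding q_def using that
    by (intro normal_tail_log_variance_power_choose_two_tendsto_one c_pos) auto
  ultimately show ?thesis by (blast intro: Lim_transform_eventually)
qed

end
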